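(* Let $d\ge1$, $n\ge1$ be integers and let $g$ be a real form of degree $2n$ in $d$ variables with $g(\mathbf{x})\ge0$ for all $\mathbf{x}\in\mathbb{R}^d$ and $g(\mathbf{x})=0$ only if $\mathbf{x}=0$. Let $d\mu=\exp(-g(\mathbf{x}))\,d\mathbf{x}$, let $c^*>0$ be defined by $1/c^*=\int_{\mathbb{R}^d}\exp(-g(\mathbf{x}))\,d\mathbf{x}$, let $\mathbf{v}_{2n}(\mathbf{x})=(\mathbf{x}^{\boldsymbol{\alpha}})_{\boldsymbol{\alpha}\in\mathbb{N}^d_{2n}}$ be the vector of all degree-$2n$ monomials, and $\boldsymbol{\mu}^{(2n)}:=\int\mathbf{v}_{2n}(\mathbf{x})\,d\mu(\mathbf{x})$. Consider the problem \[\tau=\min_{0<q\in L^1(\mathbb{R}^d)}\Big\{\int_{\mathbb{R}^d}q(\mathbf{x})\ln q(\mathbf{x})\,d\mathbf{x}:\ \int_{\mathbb{R}^d}q(\mathbf{x})\,d\mathbf{x}=1,\ \int_{\mathbb{R}^d}\mathbf{v}_{2n}(\mathbf{x})\,q(\mathbf{x})\,d\mathbf{x}=c^*\boldsymbol{\mu}^{(2n)}\Big\},\] where the minimum is over Lebesgue-integrable, everywhere positive functions $q$. Then $q^*(\mathbf{x}):=c^*\exp(-g(\mathbf{x}))$ is the unique optimal solution of this problem.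
   Context: $\mathbb{N}^d_{2n}=\{\boldsymbol{\alpha}\in\mathbb{N}^d:\sum_i\alpha_i=2n\}$. *)

theory Defs
  imports "HOL-Analysis.Analysis"
begin

definition multi_indices :: "nat \<Rightarrow> ('d::finite \<Rightarrow> nat) set" where
  "multi_indices k = {\<alpha>. (\<Sum>i\<in>UNIV. \<alpha> i) = k}"

definition monom :: "('d::finite \<Rightarrow> nat) \<Rightarrow> real^'d \<Rightarrow> real" where
  "monom \<alpha> x = (\<Prod>i\<in>UNIV. (x $ i) ^ \<alpha> i)"

definition is_form :: "(real^'d::finite \<Rightarrow> real) \<Rightarrow> nat \<Rightarrow> bool" where
  "is_form g k \<longleftrightarrow> (\<exists>c :: ('d \<Rightarrow> nat) \<Rightarrow> real.
      \<forall>x. g x = (\<Sum>\<alpha>\<in>multi_indices k. c \<alpha> * monom \<alpha> x))"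

end

theory Submission
  imports Defs "HOL-Real_Asymp.Real_Asymp"
begin

text \<open>
  Since ln q* = ln c* - g and g is a combination of the degree-2n
  monomials, the moment constraints force the cross entropy of every feasible q against q* to be
  that of q* itself. Gibbs' inequality, i.e. the pointwise bound a ln b \<le> a ln a + b - a with
  equality only for a = b, then shows that q* minimises the entropy, uniquely up to null sets.
  The integrals exist because a positive definite form of degree k \<ge> 1 is bounded below by
  m |x|^k with m > 0, so any monomial times exp (-g) is dominated by |x|^p exp (-m |x|).
\<close>

lemma summable_real_power_mult_exp:
  assumes "m > 0"
  shows "summable (\<lambda>N::nat. real N ^ p * exp (- m * real N))"
proof (rule summable_comparison_test_bigo)
  show "summable (\<lambda>n. norm (1 / real n ^ 2))"
    using inverse_power_summable[of 2, where 'a=real] by (simp add: divide_inverse)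
  show "(\<lambda>N::nat. real N ^ p * exp (- m * real N)) \<in> O(\<lambda>N. 1 / real N ^ 2)"
    using assms by real_asymp
qed

lemma norm_power_mult_exp_le:
  fixes x :: "'a::real_normed_vector"
  assumes "m > 0" "norm x \<le> t" "t \<le> norm x + 1"
  shows "norm x ^ p * exp (- m * norm x) \<le> exp m * (t ^ p * exp (- m * t))"
proof -
  have "exp (- m * norm x) \<le> exp (m - m * t)"
    using assms mult_left_mono[of t "norm x + 1" m] by (simp add: algebra_simps)
  then have "exp (- m * norm x) \<le> exp m * exp (- m * t)"
    by (simp add: exp_diff exp_minus field_simps)
  moreover have "norm x ^ p \<le> t ^ p"
    using assms(2) by (simp add: power_mono)
  ultimately have "norm x ^ p * exp (- m * norm x) \<le> t ^ p * (exp m * exp (- m * t))"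
    using order_trans[OF norm_ge_zero assms(2)] by (intro mult_mono) auto
  then show ?thesis
    by (simp add: mult_ac)
qed

text \<open>Cover the space by the balls of integer radius N, weighted by the value of the integrand
  on the shell N - 1 < |x| \<le> N; the ball of radius N has volume proportional to N ^ DIM('a).\<close>
lemma integrable_norm_power_mult_exp:
  fixes m :: real
  assumes "m > 0"
  shows "integrable lborel (\<lambda>x::'a::euclidean_space. norm x ^ p * exp (- m * norm x))"
proof (rule integrableI_bounded)
  let ?f = "\<lambda>x::'a. norm x ^ p * exp (- m * norm x)"
  show "?f \<in> borel_measurable lborel"
    by measurable
  define b where "b N = exp m * (real N ^ p * exp (- m * real N))" for N :: nat
  define B where "B N x = ennreal (b N) * indicator (cball (0::'a) (real N)) x" for N x
  have b_nonneg: "b N \<ge> 0" for N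
    by (simp add: b_def)
  have bound: "ennreal (norm (?f x)) \<le> (\<Sum>N. B N x)" for x
  proof -
    define N where "N = nat \<lceil>norm x\<rceil>"
    have N: "norm x \<le> real N" "real N \<le> norm x + 1"
      unfolding N_def using ceiling_correct[of "norm x"] by (simp_all add: of_nat_nat)
    then have "ennreal (norm (?f x)) \<le> B N x"
      using norm_power_mult_exp_le[OF assms N] by (simp add: B_def b_def ennreal_leI)
    also have "\<dots> \<le> (\<Sum>n<Suc N. B n x)"
      by (rule member_le_sum) auto
    also have "\<dots> \<le> (\<Sum>N. B N x)"
      by (rule sum_le_suminf) (auto intro: summableI)
    finally show ?thesis .
  qed
  have "summable (\<lambda>N. exp m * unit_ball_vol DIM('a) * (real N ^ (p + DIM('a)) * exp (- m * real N)))"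
    by (intro summable_mult summable_real_power_mult_exp assms)
  then have summable: "summable (\<lambda>N. b N * (unit_ball_vol DIM('a) * real N ^ DIM('a)))"
    by (simp add: b_def power_add mult_ac)
  have "(\<integral>\<^sup>+x. ennreal (norm (?f x)) \<partial>lborel) \<le> (\<integral>\<^sup>+x. (\<Sum>N. B N x) \<partial>lborel)"
    using bound by (simp add: nn_integral_mono)
  also have "\<dots> = (\<Sum>N. \<integral>\<^sup>+x. B N x \<partial>lborel)"
    unfolding B_def
    by (rule nn_integral_suminf)
       (auto intro!: borel_measurable_indicator measurable_compose[OF _ borel_measurable_times_ennreal])
  also have "\<dots> = (\<Sum>N. ennreal (b N * (unit_ball_vol DIM('a) * real N ^ DIM('a))))"
    by (simp add: B_def nn_integral_cmult_indicator emeasure_cball ennreal_mult b_nonneg)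
  also have "\<dots> = ennreal (\<Sum>N. b N * (unit_ball_vol DIM('a) * real N ^ DIM('a)))"
    using summable b_nonneg by (intro suminf_ennreal2) auto
  finally show "(\<integral>\<^sup>+x. ennreal (norm (?f x)) \<partial>lborel) < \<infinity>"
    by (simp add: order_le_less_trans)
qed

lemma power_ge_minus_one:
  fixes t :: real
  assumes "t \<ge> 0" "k \<ge> 1"
  shows "t - 1 \<le> t ^ k"
proof (cases "t \<le> 1")
  case True
  then show ?thesis
    using zero_le_power[of t k] assms(1) by linarith
next
  case False
  then have "t ^ 1 \<le> t ^ k"
    using assms by (intro power_increasing) auto
  then show ?thesis
    by simp
qed

lemma monom_scaleR: "monom \<alpha> (c *\<^sub>R x) = c ^ (\<Sum>i\<in>UNIV. \<alpha> i) * monom \<alpha> x"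
  by (simp add: monom_def power_mult_distrib prod.distrib power_sum)

lemma continuous_on_monom: "continuous_on A (monom \<alpha>)"
  unfolding monom_def by (intro continuous_intros)

lemma borel_measurable_monom: "monom \<alpha> \<in> borel_measurable lborel"
  using borel_measurable_continuous_onI[OF continuous_on_monom] by (simp add: measurable_lborel2)

lemma abs_monom_le: "\<bar>monom \<alpha> x\<bar> \<le> norm x ^ (\<Sum>i\<in>UNIV. \<alpha> i)"
proof -
  have "\<bar>monom \<alpha> x\<bar> = (\<Prod>i\<in>UNIV. \<bar>x $ i\<bar> ^ \<alpha> i)"
    by (simp add: monom_def abs_prod power_abs)
  also have "\<dots> \<le> (\<Prod>i\<in>UNIV. norm x ^ \<alpha> i)"
    by (intro prod_mono conjI power_mono) (auto simp: component_le_norm_cart)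
  also have "\<dots> = norm x ^ (\<Sum>i\<in>UNIV. \<alpha> i)"
    by (simp add: power_sum)
  finally show ?thesis .
qed

lemma is_form_homogeneous:
  assumes "is_form g k"
  shows "g (t *\<^sub>R x) = t ^ k * g x"
proof -
  obtain c where g: "\<And>x. g x = (\<Sum>\<alpha>\<in>multi_indices k. c \<alpha> * monom \<alpha> x)"
    using assms unfolding is_form_def by blast
  show ?thesis
    unfolding g monom_scaleR sum_distrib_left by (intro sum.cong) (auto simp: multi_indices_def)
qed

lemma is_form_continuous:
  assumes "is_form g k"
  shows "continuous_on A g"
proof -
  obtain c where "g = (\<lambda>x. \<Sum>\<alpha>\<in>multi_indices k. c \<alpha> * monom \<alpha> x)"
    using assms unfolding is_form_def by blast
  then show ?thesis
    by (auto intro!: continuous_intros continuous_on_monom)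
qed

lemma is_form_measurable: "is_form g k \<Longrightarrow> g \<in> borel_measurable lborel"
  using borel_measurable_continuous_onI[OF is_form_continuous] by (simp add: measurable_lborel2)

text \<open>By homogeneity, m can be taken as the minimum of g on the unit sphere.\<close>
lemma positive_definite_form_lower_bound:
  assumes form: "is_form g k" and pos: "\<And>x. x \<noteq> 0 \<Longrightarrow> g x > 0"
  obtains m where "m > 0" "\<And>x. m * norm x ^ k \<le> g x"
proof -
  have "sphere (0::real^'d) 1 \<noteq> {}"
    by simp
  then obtain x0 where x0: "x0 \<in> sphere 0 1" and min: "\<And>y. y \<in> sphere 0 1 \<Longrightarrow> g x0 \<le> g y"
    using continuous_attains_inf[OF compact_sphere _ is_form_continuous[OF form]] by blast
  have "g x0 * norm x ^ k \<le> g x" for x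
  proof (cases "x = 0")
    case True
    then show ?thesis
      using is_form_homogeneous[OF form, of 0 x0] by simp
  next
    case False
    have "g x = norm x ^ k * g (x /\<^sub>R norm x)"
      using is_form_homogeneous[OF form, of "norm x" "x /\<^sub>R norm x"] False by simp
    moreover have "g x0 \<le> g (x /\<^sub>R norm x)"
      using False by (intro min) simp
    ultimately show ?thesis
      by (metis mult.commute mult_left_mono norm_ge_zero zero_le_power)
  qed
  moreover have "g x0 > 0"
    using x0 by (intro pos) auto
  ultimately show ?thesis
    using that by blast
qed

lemma integrable_monom_mult_exp_neg_form:
  fixes g :: "real^'d \<Rightarrow> real"
  assumes form: "is_form g k" and "k \<ge> 1" and pos: "\<And>x. x \<noteq> 0 \<Longrightarrow> g x > 0"
  shows "integrable lborel (\<lambda>x. monom \<alpha> x * exp (- g x))"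
proof -
  obtain m where m: "m > 0" "\<And>x. m * norm x ^ k \<le> g x"
    using positive_definite_form_lower_bound[OF form pos] by blast
  let ?p = "\<Sum>i\<in>UNIV. \<alpha> i"
  show ?thesis
  proof (rule Bochner_Integration.integrable_bound)
    show "integrable lborel (\<lambda>x. exp m * (norm x ^ ?p * exp (- m * norm x)))"
      by (intro integrable_mult_right integrable_norm_power_mult_exp m)
    show "(\<lambda>x. monom \<alpha> x * exp (- g x)) \<in> borel_measurable lborel"
      using is_form_measurable[OF form] borel_measurable_monom by measurable
    show "AE x in lborel. norm (monom \<alpha> x * exp (- g x)) \<le>
        norm (exp m * (norm x ^ ?p * exp (- m * norm x)))"
    proof (rule AE_I2)
      fix x :: "real^'d"
      have "m * (norm x - 1) \<le> m * norm x ^ k"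
        using m(1) power_ge_minus_one[OF norm_ge_zero \<open>k \<ge> 1\<close>] by (intro mult_left_mono) auto
      also have "\<dots> \<le> g x"
        by (rule m(2))
      finally have "exp (- g x) \<le> exp m * exp (- m * norm x)"
        by (simp add: exp_add[symmetric] algebra_simps)
      then have "\<bar>monom \<alpha> x\<bar> * exp (- g x) \<le> norm x ^ ?p * (exp m * exp (- m * norm x))"
        by (intro mult_mono abs_monom_le) auto
      then show "norm (monom \<alpha> x * exp (- g x)) \<le> norm (exp m * (norm x ^ ?p * exp (- m * norm x)))"
        by (simp add: abs_mult mult_ac)
    qed
  qed
qed

lemma is_form_mult_eq_sum:
  assumes "is_form g k"
  obtains c where "\<And>f x. g x * f x = (\<Sum>\<alpha>\<in>multi_indices k. c \<alpha> * (monom \<alpha> x * f x))"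
proof -
  obtain c where "\<And>x. g x = (\<Sum>\<alpha>\<in>multi_indices k. c \<alpha> * monom \<alpha> x)"
    using assms unfolding is_form_def by blast
  then show ?thesis
    using that[of c] by (simp add: sum_distrib_right mult.assoc)
qed

lemma integrable_form_mult:
  assumes "is_form g k"
    and "\<And>\<alpha>. \<alpha> \<in> multi_indices k \<Longrightarrow> integrable M (\<lambda>x. monom \<alpha> x * q x)"
  shows "integrable M (\<lambda>x. g x * q x)"
proof -
  obtain c where "\<And>f x. g x * f x = (\<Sum>\<alpha>\<in>multi_indices k. c \<alpha> * (monom \<alpha> x * f x))"
    using is_form_mult_eq_sum[OF assms(1)] by blast
  then show ?thesis
    using assms(2) by simp
qed

lemma integral_form_mult_eq_if_moments_eq:
  assumes "is_form g k"
    and "\<And>\<alpha>. \<alpha> \<in> multi_indices k \<Longrightarrow> integrable M (\<lambda>x. monom \<alpha> x * p x)"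
    and "\<And>\<alpha>. \<alpha> \<in> multi_indices k \<Longrightarrow> integrable M (\<lambda>x. monom \<alpha> x * q x)"
    and "\<And>\<alpha>. \<alpha> \<in> multi_indices k \<Longrightarrow>
      (\<integral>x. monom \<alpha> x * q x \<partial>M) = (\<integral>x. monom \<alpha> x * p x \<partial>M)"
  shows "(\<integral>x. g x * q x \<partial>M) = (\<integral>x. g x * p x \<partial>M)"
proof -
  obtain c where "\<And>f x. g x * f x = (\<Sum>\<alpha>\<in>multi_indices k. c \<alpha> * (monom \<alpha> x * f x))"
    using is_form_mult_eq_sum[OF assms(1)] by blast
  then show ?thesis
    using assms(2-4) by simp
qed

lemma integral_mult_ln_exp_neg_form:
  assumes "is_form g k" and "c > 0" and "integrable M q"
    and "\<And>\<alpha>. \<alpha> \<in> multi_indices k \<Longrightarrow> integrable M (\<lambda>x. monom \<alpha> x * q x)"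
  shows "integrable M (\<lambda>x. q x * ln (c * exp (- g x)))"
    and "(\<integral>x. q x * ln (c * exp (- g x)) \<partial>M) = ln c * (\<integral>x. q x \<partial>M) - (\<integral>x. g x * q x \<partial>M)"
proof -
  have "q x * ln (c * exp (- g x)) = ln c * q x - g x * q x" for x
    using assms(2) by (simp add: ln_mult algebra_simps)
  moreover have "integrable M (\<lambda>x. g x * q x)"
    using integrable_form_mult assms(1,4) by blast
  ultimately show "integrable M (\<lambda>x. q x * ln (c * exp (- g x)))"
    and "(\<integral>x. q x * ln (c * exp (- g x)) \<partial>M) = ln c * (\<integral>x. q x \<partial>M) - (\<integral>x. g x * q x \<partial>M)"
    using assms(3) by simp_all
qed

lemma mult_ln_le_mult_ln_add_diff:
  fixes a b :: real
  assumes "a > 0" "b > 0"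
  shows "a * ln b \<le> a * ln a + (b - a)"
    and "a * ln b = a * ln a + (b - a) \<longleftrightarrow> a = b"
proof -
  have ratio: "a * ln b - (a * ln a + (b - a)) = a * (ln (b / a) - (b / a - 1))"
    using assms by (simp add: ln_div algebra_simps)
  have "ln (b / a) \<le> b / a - 1"
    using assms by (intro ln_le_minus_one) simp
  then show "a * ln b \<le> a * ln a + (b - a)"
    using ratio assms(1) mult_le_0_iff[of a "ln (b / a) - (b / a - 1)"] by linarith
  have "a * ln b = a * ln a + (b - a) \<longleftrightarrow> ln (b / a) = b / a - 1"
    using ratio assms(1) by auto
  also have "\<dots> \<longleftrightarrow> a = b"
    using assms ln_eq_minus_one[of "b / a"] by auto
  finally show "a * ln b = a * ln a + (b - a) \<longleftrightarrow> a = b" .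
qed

lemma gibbs_inequality:
  fixes p q :: "'a \<Rightarrow> real"
  assumes pos: "\<And>x. q x > 0" "\<And>x. p x > 0"
    and int: "integrable M q" "integrable M p"
      "integrable M (\<lambda>x. q x * ln (q x))" "integrable M (\<lambda>x. q x * ln (p x))"
    and mass: "(\<integral>x. q x \<partial>M) = (\<integral>x. p x \<partial>M)"
  shows "(\<integral>x. q x * ln (p x) \<partial>M) \<le> (\<integral>x. q x * ln (q x) \<partial>M)"
    and "(\<integral>x. q x * ln (q x) \<partial>M) = (\<integral>x. q x * ln (p x) \<partial>M) \<Longrightarrow> AE x in M. q x = p x"
proof -
  define h where "h x = q x * ln (q x) + (p x - q x) - q x * ln (p x)" for x
  have h_nonneg: "h x \<ge> 0" for x
    using mult_ln_le_mult_ln_add_diff(1)[OF pos(1,2)] by (simp add: h_def)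
  have h_eq_0_iff: "h x = 0 \<longleftrightarrow> q x = p x" for x
    using mult_ln_le_mult_ln_add_diff(2)[OF pos(1)[of x] pos(2)[of x]] by (auto simp: h_def)
  have int_h: "integrable M h"
    unfolding h_def using int by simp
  have integral_h: "(\<integral>x. h x \<partial>M) = (\<integral>x. q x * ln (q x) \<partial>M) - (\<integral>x. q x * ln (p x) \<partial>M)"
    unfolding h_def using int mass by simp
  show "(\<integral>x. q x * ln (p x) \<partial>M) \<le> (\<integral>x. q x * ln (q x) \<partial>M)"
    using Bochner_Integration.integral_nonneg[of M h] h_nonneg integral_h by simp
  assume "(\<integral>x. q x * ln (q x) \<partial>M) = (\<integral>x. q x * ln (p x) \<partial>M)"
  then have "AE x in M. h x = 0"
    using integral_nonneg_eq_0_iff_AE[OF int_h] h_nonneg integral_h by simp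
  then show "AE x in M. q x = p x"
    by (simp add: h_eq_0_iff)
qed

lemma integral_lborel_pos:
  fixes f :: "'a::euclidean_space \<Rightarrow> real"
  assumes "integrable lborel f" "\<And>x. f x > 0"
  shows "(\<integral>x. f x \<partial>lborel) > 0"
proof (rule ccontr)
  assume "\<not> (\<integral>x. f x \<partial>lborel) > 0"
  moreover have "(\<integral>x. f x \<partial>lborel) \<ge> 0"
    using assms(2) by (simp add: less_imp_le)
  ultimately have "(\<integral>x. f x \<partial>lborel) = 0"
    by linarith
  then have "AE x in lborel. f x = 0"
    using integral_nonneg_eq_0_iff_AE[OF assms(1)] assms(2) by (simp add: less_imp_le)
  then have "AE x::'a in lborel. False"
    by (rule eventually_mono) (metis assms(2) less_irrefl)
  then show False
    using ae_filter_eq_bot_iff[of "lborel :: 'a measure"] by (simp add: eventually_False)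
qed

lemma exp_neg_form_minimises_entropy:
  fixes g :: "real^'d \<Rightarrow> real"
  assumes form: "is_form g k" and "c > 0" and p_eq: "\<And>x. p x = c * exp (- g x)"
    and p: "integrable M p" "\<And>\<alpha>. \<alpha> \<in> multi_indices k \<Longrightarrow> integrable M (\<lambda>x. monom \<alpha> x * p x)"
    and q: "\<And>x. q x > 0" "integrable M q" "integrable M (\<lambda>x. q x * ln (q x))"
      "\<And>\<alpha>. \<alpha> \<in> multi_indices k \<Longrightarrow> integrable M (\<lambda>x. monom \<alpha> x * q x)"
    and mass: "(\<integral>x. q x \<partial>M) = (\<integral>x. p x \<partial>M)"
    and moments: "\<And>\<alpha>. \<alpha> \<in> multi_indices k \<Longrightarrow>
      (\<integral>x. monom \<alpha> x * q x \<partial>M) = (\<integral>x. monom \<alpha> x * p x \<partial>M)"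
  shows "(\<integral>x. p x * ln (p x) \<partial>M) \<le> (\<integral>x. q x * ln (q x) \<partial>M)"
    and "(\<integral>x. q x * ln (q x) \<partial>M) = (\<integral>x. p x * ln (p x) \<partial>M) \<Longrightarrow> AE x in M. q x = p x"
proof -
  have p_pos: "p x > 0" for x
    using \<open>c > 0\<close> by (simp add: p_eq)
  note cross_entropy = integral_mult_ln_exp_neg_form[OF form \<open>c > 0\<close>, folded p_eq]
  have "(\<integral>x. g x * q x \<partial>M) = (\<integral>x. g x * p x \<partial>M)"
    using integral_form_mult_eq_if_moments_eq[OF form p(2) q(4) moments] .
  then have same_cross_entropy: "(\<integral>x. q x * ln (p x) \<partial>M) = (\<integral>x. p x * ln (p x) \<partial>M)"
    using cross_entropy(2)[OF q(2,4)] cross_entropy(2)[OF p] mass by simp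
  note gibbs = gibbs_inequality[OF q(1) p_pos q(2) p(1) q(3) cross_entropy(1)[OF q(2,4)] mass]
  show "(\<integral>x. p x * ln (p x) \<partial>M) \<le> (\<integral>x. q x * ln (q x) \<partial>M)"
    using gibbs(1) same_cross_entropy by simp
  show "AE x in M. q x = p x" if "(\<integral>x. q x * ln (q x) \<partial>M) = (\<integral>x. p x * ln (p x) \<partial>M)"
    using gibbs(2) same_cross_entropy that by simp
qed

theorem lemma2p5:
  fixes g :: "real^'d \<Rightarrow> real" and n :: nat
  assumes "n \<ge> 1"
    and "is_form g (2 * n)"
    and "\<forall>x. g x \<ge> 0"
    and "\<forall>x. g x = 0 \<longrightarrow> x = 0"
  defines "cs \<equiv> 1 / (\<integral>x. exp (- g x) \<partial>lborel)"
  defines "qs \<equiv> (\<lambda>x. cs * exp (- g x))"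
  defines "feasible \<equiv> (\<lambda>q :: real^'d \<Rightarrow> real.
      (\<forall>x. q x > 0) \<and> integrable lborel q \<and> (\<integral>x. q x \<partial>lborel) = 1 \<and>
      (\<forall>\<alpha>\<in>multi_indices (2 * n).
          integrable lborel (\<lambda>x. monom \<alpha> x * q x) \<and>
          (\<integral>x. monom \<alpha> x * q x \<partial>lborel) = cs * (\<integral>x. monom \<alpha> x * exp (- g x) \<partial>lborel)))"
  shows "feasible qs \<and> integrable lborel (\<lambda>x. qs x * ln (qs x)) \<and>
    (\<forall>q. feasible q \<and> integrable lborel (\<lambda>x. q x * ln (q x)) \<longrightarrow>
        (\<integral>x. qs x * ln (qs x) \<partial>lborel) \<le> (\<integral>x. q x * ln (q x) \<partial>lborel) \<and>
        ((\<integral>x. q x * ln (q x) \<partial>lborel) = (\<integral>x. qs x * ln (qs x) \<partial>lborel)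
            \<longrightarrow> (AE x in lborel. q x = qs x)))"
proof -
  have pos: "\<And>x. x \<noteq> 0 \<Longrightarrow> g x > 0"
    using assms(3,4) by (metis less_eq_real_def)
  have int_monom_exp: "integrable lborel (\<lambda>x. monom \<alpha> x * exp (- g x))" for \<alpha>
    using integrable_monom_mult_exp_neg_form[OF assms(2) _ pos] assms(1) by simp
  have int_exp: "integrable lborel (\<lambda>x. exp (- g x))"
    using int_monom_exp[of "\<lambda>_. 0"] by (simp add: monom_def)
  have "cs > 0"
    unfolding cs_def using integral_lborel_pos[OF int_exp] by simp
  have feasible_qs: "feasible qs"
    unfolding feasible_def qs_def using \<open>cs > 0\<close> int_exp int_monom_exp
    by (simp add: cs_def mult.left_commute)
  have qs_eq: "qs x = cs * exp (- g x)" for x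
    by (simp add: qs_def)
  show ?thesis
  proof (intro conjI allI impI)
    show "feasible qs"
      by (rule feasible_qs)
    show "integrable lborel (\<lambda>x. qs x * ln (qs x))"
      using integral_mult_ln_exp_neg_form(1)[OF assms(2) \<open>cs > 0\<close>] feasible_qs
      unfolding feasible_def qs_def by simp
    fix q assume "feasible q \<and> integrable lborel (\<lambda>x. q x * ln (q x))"
    then show "(\<integral>x. qs x * ln (qs x) \<partial>lborel) \<le> (\<integral>x. q x * ln (q x) \<partial>lborel)"
      and "(\<integral>x. q x * ln (q x) \<partial>lborel) = (\<integral>x. qs x * ln (qs x) \<partial>lborel) \<Longrightarrow> AE x in lborel. q x = qs x"
      using exp_neg_form_minimises_entropy[OF assms(2) \<open>cs > 0\<close> qs_eq, of lborel q] feasible_qs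
      unfolding feasible_def by simp_all
  qed
qed

end
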